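(* Let $\lambda_1,\lambda_2,\lambda_3,\lambda_4>0$ and $\alpha>0$. For a decomposition $\bm{X}=\sum_{d=1}^{D/P}\bm{W}\times_1\bm{H}_{:d:}\times_2\bm{R}_{:d:}\times_3\bm{T}_{:d:}$ define $$A=\sum_{d=1}^{D/P}\Big[\lambda_1\big(\|\bm{H}_{:d:}\|_F^{\alpha}+\|\bm{R}_{:d:}\|_F^{\alpha}+\|\bm{T}_{:d:}\|_F^{\alpha}\big)+\lambda_4\big(\|\bm{W}\times_2\bm{R}_{:d:}\times_3\bm{T}_{:d:}\|_F^{\alpha}+\|\bm{W}\times_3\bm{T}_{:d:}\times_1\bm{H}_{:d:}\|_F^{\alpha}+\|\bm{W}\times_1\bm{H}_{:d:}\times_2\bm{R}_{:d:}\|_F^{\alpha}\big)\Big],$$ $$B=\sum_{d=1}^{D/P}\Big[\lambda_2\big(\|\bm{T}_{:d:}\|_F^{\alpha}\|\bm{R}_{:d:}\|_F^{\alpha}+\|\bm{T}_{:d:}\|_F^{\alpha}\|\bm{H}_{:d:}\|_F^{\alpha}+\|\bm{R}_{:d:}\|_F^{\alpha}\|\bm{H}_{:d:}\|_F^{\alpha}\big)+\lambda_3\big(\|\bm{W}\times_1\bm{H}_{:d:}\|_F^{\alpha}+\|\bm{W}\times_2\bm{R}_{:d:}\|_F^{\alpha}+\|\bm{W}\times_3\bm{T}_{:d:}\|_F^{\alpha}\big)\Big].$$ Then: (i) for any tensor $\bm{X}\in\mathbb{R}^{n_1\times n_2\times n_3}$ there exists a decomposition of $\bm{X}$ of this form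 for which $A<\frac{\sqrt{\lambda_1\lambda_4}}{\sqrt{\lambda_2\lambda_3}}B$; and (ii) for some tensor $\bm{X}$ there exists a decomposition of $\bm{X}$ of this form for which $A>\frac{\sqrt{\lambda_1\lambda_4}}{\sqrt{\lambda_2\lambda_3}}B$.
   Context: A decomposition of $\bm{X}\in\mathbb{R}^{n_1\times n_2\times n_3}$ consists of positive integers $P,D$ with $P\mid D$, a core $\bm{W}\in\mathbb{R}^{P\times P\times P}$, and arrays $\bm{H}\in\mathbb{R}^{n_1\times (D/P)\times P}$, $\bm{R}\in\mathbb{R}^{n_2\times (D/P)\times P}$, $\bm{T}\in\mathbb{R}^{n_3\times (D/P)\times P}$ with $\bm{X}=\sum_{d=1}^{D/P}\bm{W}\times_1\bm{H}_{:d:}\times_2\bm{R}_{:d:}\times_3\bm{T}_{:d:}$, where $\bm{H}_{:d:}\in\mathbb{R}^{n_1\times P}$ is the slice with middle index $d$ and $(\bm{W}\times_1\bm{A})_{imn}=\sum_l\bm{W}_{lmn}\bm{A}_{il}$ (with $\times_2,\times_3$ analogous). $\|\cdot\|_F$ is the Frobenius norm. *)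

theory Defs
  imports Complex_Main
begin

text \<open>Third-order tensors are functions nat => nat => nat => real, indices 0-based;
  only entries inside the stated index bounds matter.
  The arrays H, R, T of size n x (D/P) x P are functions nat => nat => nat => real,
  and the slice H_{:d:} is (\<lambda>i l. H i d l).\<close>

type_synonym tensor3 = "nat \<Rightarrow> nat \<Rightarrow> nat \<Rightarrow> real"
type_synonym mat = "nat \<Rightarrow> nat \<Rightarrow> real"

definition slice :: "tensor3 \<Rightarrow> nat \<Rightarrow> mat" where
  "slice H d = (\<lambda>i l. H i d l)"

definition mode1 :: "nat \<Rightarrow> tensor3 \<Rightarrow> mat \<Rightarrow> tensor3" where
  "mode1 p W A = (\<lambda>i m n. \<Sum>l<p. W l m n * A i l)"
definition mode2 :: "nat \<Rightarrow> tensor3 \<Rightarrow> mat \<Rightarrow> tensor3" where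
  "mode2 p W A = (\<lambda>l j n. \<Sum>m<p. W l m n * A j m)"
definition mode3 :: "nat \<Rightarrow> tensor3 \<Rightarrow> mat \<Rightarrow> tensor3" where
  "mode3 p W A = (\<lambda>l m k. \<Sum>n<p. W l m n * A k n)"

definition frob2 :: "nat \<Rightarrow> nat \<Rightarrow> mat \<Rightarrow> real" where
  "frob2 a b M = sqrt (\<Sum>i<a. \<Sum>j<b. (M i j)\<^sup>2)"
definition frob3 :: "nat \<Rightarrow> nat \<Rightarrow> nat \<Rightarrow> tensor3 \<Rightarrow> real" where
  "frob3 a b c X = sqrt (\<Sum>i<a. \<Sum>j<b. \<Sum>k<c. (X i j k)\<^sup>2)"

definition is_decomp ::
  "nat \<Rightarrow> nat \<Rightarrow> nat \<Rightarrow> tensor3 \<Rightarrow> nat \<Rightarrow> nat \<Rightarrow> tensor3 \<Rightarrow> tensor3 \<Rightarrow> tensor3 \<Rightarrow> tensor3 \<Rightarrow> bool" where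
  "is_decomp n1 n2 n3 X P D W H R T \<longleftrightarrow>
     0 < P \<and> 0 < D \<and> P dvd D \<and>
     (\<forall>i<n1. \<forall>j<n2. \<forall>k<n3.
        X i j k = (\<Sum>d<D div P.
           mode3 P (mode2 P (mode1 P W (slice H d)) (slice R d)) (slice T d) i j k))"

definition A_val ::
  "real \<Rightarrow> real \<Rightarrow> real \<Rightarrow> nat \<Rightarrow> nat \<Rightarrow> nat \<Rightarrow> nat \<Rightarrow> nat \<Rightarrow> tensor3 \<Rightarrow> tensor3 \<Rightarrow> tensor3 \<Rightarrow> tensor3 \<Rightarrow> real" where
  "A_val l1 l4 \<alpha> n1 n2 n3 P D W H R T =
     (\<Sum>d<D div P.
        l1 * (frob2 n1 P (slice H d) powr \<alpha> + frob2 n2 P (slice R d) powr \<alpha>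
              + frob2 n3 P (slice T d) powr \<alpha>)
      + l4 * (frob3 P n2 n3 (mode3 P (mode2 P W (slice R d)) (slice T d)) powr \<alpha>
              + frob3 n1 P n3 (mode1 P (mode3 P W (slice T d)) (slice H d)) powr \<alpha>
              + frob3 n1 n2 P (mode2 P (mode1 P W (slice H d)) (slice R d)) powr \<alpha>))"

definition B_val ::
  "real \<Rightarrow> real \<Rightarrow> real \<Rightarrow> nat \<Rightarrow> nat \<Rightarrow> nat \<Rightarrow> nat \<Rightarrow> nat \<Rightarrow> tensor3 \<Rightarrow> tensor3 \<Rightarrow> tensor3 \<Rightarrow> tensor3 \<Rightarrow> real" where
  "B_val l2 l3 \<alpha> n1 n2 n3 P D W H R T =
     (\<Sum>d<D div P.
        l2 * (frob2 n3 P (slice T d) powr \<alpha> * frob2 n2 P (slice R d) powr \<alpha>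
              + frob2 n3 P (slice T d) powr \<alpha> * frob2 n1 P (slice H d) powr \<alpha>
              + frob2 n2 P (slice R d) powr \<alpha> * frob2 n1 P (slice H d) powr \<alpha>)
      + l3 * (frob3 n1 P P (mode1 P W (slice H d)) powr \<alpha>
              + frob3 P n2 P (mode2 P W (slice R d)) powr \<alpha>
              + frob3 P P n3 (mode3 P W (slice T d)) powr \<alpha>))"

end

theory Submission
  imports Defs
begin

text \<open>Multiplying the three factors by \<open>t > 0\<close> and the core by \<open>t\<^sup>-\<^sup>3\<close> does not change
  the decomposed tensor, but multiplies the \<open>\<lambda>\<^sub>1\<close>-, \<open>\<lambda>\<^sub>4\<close>-, \<open>\<lambda>\<^sub>2\<close>- and \<open>\<lambda>\<^sub>3\<close>-terms
  by \<open>t\<^sup>\<alpha>\<close>, \<open>t\<^sup>-\<^sup>\<alpha>\<close>, \<open>t\<^sup>2\<^sup>\<alpha>\<close> and \<open>t\<^sup>-\<^sup>2\<^sup>\<alpha>\<close>. For large \<open>t\<close> the \<open>\<lambda>\<^sub>2\<close>-term of \<open>B\<close>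
  dominates \<open>A\<close>, which gives (i) as soon as that term is nonzero, e.g. for identity factors
  with core \<open>X\<close>. For (ii), the zero tensor has a decomposition with zero core, one nonzero
  and two zero factors, so that \<open>B = 0 < A\<close>.\<close>

lemma slice_scale [simp]: "slice (\<lambda>i d l. x * H i d l) d = (\<lambda>i l. x * slice H d i l)"
  by (simp add: slice_def)

lemma mode1_scale_left [simp]:
  "mode1 p (\<lambda>a b c. x * W a b c) M = (\<lambda>a b c. x * mode1 p W M a b c)"
  by (simp add: mode1_def sum_distrib_left mult_ac)

lemma mode1_scale_right [simp]:
  "mode1 p W (\<lambda>a b. y * M a b) = (\<lambda>a b c. y * mode1 p W M a b c)"
  by (simp add: mode1_def sum_distrib_left mult_ac)

lemma mode2_scale_left [simp]:
  "mode2 p (\<lambda>a b c. x * W a b c) M = (\<lambda>a b c. x * mode2 p W M a b c)"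
  by (simp add: mode2_def sum_distrib_left mult_ac)

lemma mode2_scale_right [simp]:
  "mode2 p W (\<lambda>a b. y * M a b) = (\<lambda>a b c. y * mode2 p W M a b c)"
  by (simp add: mode2_def sum_distrib_left mult_ac)

lemma mode3_scale_left [simp]:
  "mode3 p (\<lambda>a b c. x * W a b c) M = (\<lambda>a b c. x * mode3 p W M a b c)"
  by (simp add: mode3_def sum_distrib_left mult_ac)

lemma mode3_scale_right [simp]:
  "mode3 p W (\<lambda>a b. y * M a b) = (\<lambda>a b c. y * mode3 p W M a b c)"
  by (simp add: mode3_def sum_distrib_left mult_ac)

lemma frob2_scale [simp]: "frob2 a b (\<lambda>i j. x * M i j) = \<bar>x\<bar> * frob2 a b M"
  by (simp add: frob2_def power_mult_distrib sum_distrib_left[symmetric] real_sqrt_mult)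

lemma frob3_scale [simp]: "frob3 a b c (\<lambda>i j k. x * X i j k) = \<bar>x\<bar> * frob3 a b c X"
  by (simp add: frob3_def power_mult_distrib sum_distrib_left[symmetric] real_sqrt_mult)

lemma A_val_linear:
  "A_val l1 l4 \<alpha> n1 n2 n3 P D W H R T
     = l1 * A_val 1 0 \<alpha> n1 n2 n3 P D W H R T + l4 * A_val 0 1 \<alpha> n1 n2 n3 P D W H R T"
  by (simp add: A_val_def sum.distrib sum_distrib_left distrib_left)

lemma B_val_linear:
  "B_val l2 l3 \<alpha> n1 n2 n3 P D W H R T
     = l2 * B_val 1 0 \<alpha> n1 n2 n3 P D W H R T + l3 * B_val 0 1 \<alpha> n1 n2 n3 P D W H R T"
  by (simp add: B_val_def sum.distrib sum_distrib_left distrib_left)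

lemma A_val_nonneg: "0 \<le> l1 \<Longrightarrow> 0 \<le> l4 \<Longrightarrow> 0 \<le> A_val l1 l4 \<alpha> n1 n2 n3 P D W H R T"
  by (simp add: A_val_def sum_nonneg)

lemma B_val_nonneg: "0 \<le> l2 \<Longrightarrow> 0 \<le> l3 \<Longrightarrow> 0 \<le> B_val l2 l3 \<alpha> n1 n2 n3 P D W H R T"
  by (simp add: B_val_def sum_nonneg)

lemma is_decomp_rescale:
  assumes "is_decomp n1 n2 n3 X P D W H R T" "c * t ^ 3 = 1"
  shows "is_decomp n1 n2 n3 X P D (\<lambda>a b d. c * W a b d)
           (\<lambda>i d l. t * H i d l) (\<lambda>i d l. t * R i d l) (\<lambda>i d l. t * T i d l)"
proof -
  have cancel: "c * (t * (t * (t * z))) = z" for z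
    using assms(2) by (simp add: power3_eq_cube mult.assoc[symmetric])
  show ?thesis
    using assms(1) by (simp add: is_decomp_def cancel)
qed

lemma rescale_factor_powr:
  fixes c t \<alpha> :: real
  assumes "c * t ^ 3 = 1" "0 < t"
  shows "\<bar>c * t * t\<bar> powr \<alpha> = inverse (t powr \<alpha>)"
    and "\<bar>c * t\<bar> powr \<alpha> = inverse (t powr (2 * \<alpha>))"
proof -
  have c: "c = inverse t ^ 3"
    using assms(1) inverse_unique[of "t ^ 3" c] by (simp add: mult.commute power_inverse)
  have "\<bar>c * t * t\<bar> = inverse t" "\<bar>c * t\<bar> = inverse t * inverse t"
    using assms(2) unfolding c by (simp_all add: power3_eq_cube divide_simps)
  moreover have "t powr (2 * \<alpha>) = t powr \<alpha> * t powr \<alpha>"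
    by (simp add: powr_add[symmetric])
  ultimately show "\<bar>c * t * t\<bar> powr \<alpha> = inverse (t powr \<alpha>)"
    and "\<bar>c * t\<bar> powr \<alpha> = inverse (t powr (2 * \<alpha>))"
    using assms(2) by (simp_all add: inverse_powr powr_mult)
qed

lemma A_val_rescale:
  assumes "c * t ^ 3 = 1" "0 < t"
  shows "A_val l1 l4 \<alpha> n1 n2 n3 P D (\<lambda>a b d. c * W a b d)
           (\<lambda>i d l. t * H i d l) (\<lambda>i d l. t * R i d l) (\<lambda>i d l. t * T i d l)
         = A_val (l1 * t powr \<alpha>) (l4 / t powr \<alpha>) \<alpha> n1 n2 n3 P D W H R T"
  using assms unfolding A_val_def
  by (intro sum.cong refl)
    (simp add: powr_mult rescale_factor_powr mult.assoc[symmetric] divide_inverse; simp add: algebra_simps)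

lemma B_val_rescale:
  assumes "c * t ^ 3 = 1" "0 < t"
  shows "B_val l2 l3 \<alpha> n1 n2 n3 P D (\<lambda>a b d. c * W a b d)
           (\<lambda>i d l. t * H i d l) (\<lambda>i d l. t * R i d l) (\<lambda>i d l. t * T i d l)
         = B_val (l2 * t powr (2 * \<alpha>)) (l3 / t powr (2 * \<alpha>)) \<alpha> n1 n2 n3 P D W H R T"
proof -
  have "t powr (2 * \<alpha>) = t powr \<alpha> * t powr \<alpha>"
    by (simp add: powr_add[symmetric])
  with assms show ?thesis
    unfolding B_val_def
    by (intro sum.cong refl)
      (simp add: powr_mult rescale_factor_powr mult.assoc[symmetric] divide_inverse; simp add: algebra_simps)
qed

lemma exists_rescaled_decomp_A_val_less_B_val:
  assumes decomp: "is_decomp n1 n2 n3 X P D W H R T"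
    and b2_pos: "0 < B_val 1 0 \<alpha> n1 n2 n3 P D W H R T"
    and l: "0 \<le> l1" "0 \<le> l4" "0 < l2" "0 \<le> l3" and "0 < k" "\<alpha> \<noteq> 0"
  shows "\<exists>P D W H R T. is_decomp n1 n2 n3 X P D W H R T \<and>
           A_val l1 l4 \<alpha> n1 n2 n3 P D W H R T < k * B_val l2 l3 \<alpha> n1 n2 n3 P D W H R T"
proof -
  define a1 where "a1 = A_val 1 0 \<alpha> n1 n2 n3 P D W H R T"
  define a4 where "a4 = A_val 0 1 \<alpha> n1 n2 n3 P D W H R T"
  define b2 where "b2 = B_val 1 0 \<alpha> n1 n2 n3 P D W H R T"
  define b3 where "b3 = B_val 0 1 \<alpha> n1 n2 n3 P D W H R T"
  define a where "a = l1 * a1 + l4 * a4"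
  define u where "u = max 1 (a / (k * l2 * b2) + 1)"
  define t where "t = u powr (1 / \<alpha>)"
  define c where "c = inverse (t ^ 3)"
  have "0 < k * l2 * b2"
    using \<open>0 < k\<close> l(3) b2_pos by (simp add: b2_def)
  then have "1 \<le> u" "a < u * (k * l2 * b2)"
    by (simp_all add: u_def pos_divide_less_eq[symmetric])
  have "0 < t" "c * t ^ 3 = 1"
    using \<open>1 \<le> u\<close> by (simp_all add: t_def c_def)
  have tu: "t powr \<alpha> = u" "t powr (2 * \<alpha>) = u * u"
    using \<open>1 \<le> u\<close> \<open>\<alpha> \<noteq> 0\<close> by (simp_all add: t_def powr_powr powr_add[symmetric] power2_eq_square)
  have "0 \<le> l4 * a4"
    using l(2) by (simp add: a4_def A_val_nonneg)
  have "l4 * a4 / u \<le> l4 * a4"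
    using \<open>1 \<le> u\<close> mult_left_mono[OF \<open>1 \<le> u\<close> \<open>0 \<le> l4 * a4\<close>] by (simp add: divide_le_eq)
  also have "\<dots> \<le> u * (l4 * a4)"
    using mult_right_mono[OF \<open>1 \<le> u\<close> \<open>0 \<le> l4 * a4\<close>] by simp
  finally have "l4 * a4 / u \<le> u * (l4 * a4)" .
  let ?W = "\<lambda>a b d. c * W a b d"
  let ?H = "\<lambda>i d l. t * H i d l" and ?R = "\<lambda>i d l. t * R i d l" and ?T = "\<lambda>i d l. t * T i d l"
  have "A_val l1 l4 \<alpha> n1 n2 n3 P D ?W ?H ?R ?T = u * (l1 * a1) + l4 * a4 / u"
    using A_val_rescale[OF \<open>c * t ^ 3 = 1\<close> \<open>0 < t\<close>]
    by (simp add: tu a1_def a4_def A_val_linear[of "l1 * u"])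
  also have "\<dots> \<le> u * a"
    using \<open>l4 * a4 / u \<le> u * (l4 * a4)\<close> by (simp add: a_def distrib_left)
  also have "\<dots> < u * (u * (k * l2 * b2))"
    using \<open>1 \<le> u\<close> \<open>a < u * (k * l2 * b2)\<close> by simp
  also have "\<dots> \<le> k * (l2 * (u * u) * b2 + l3 / (u * u) * b3)"
    using \<open>0 < k\<close> \<open>1 \<le> u\<close> l by (simp add: b3_def B_val_nonneg algebra_simps)
  also have "\<dots> = k * B_val l2 l3 \<alpha> n1 n2 n3 P D ?W ?H ?R ?T"
    using B_val_rescale[OF \<open>c * t ^ 3 = 1\<close> \<open>0 < t\<close>]
    by (simp add: tu b2_def b3_def B_val_linear[of "l2 * (u * u)"])
  finally show ?thesis
    using is_decomp_rescale[OF decomp \<open>c * t ^ 3 = 1\<close>] by blast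
qed

definition id_mat :: mat where
  "id_mat i l = (if i = l then 1 else 0)"

lemma sum_mult_id_mat: "i < p \<Longrightarrow> (\<Sum>l<p. f l * id_mat i l) = f i"
  by (simp add: id_mat_def if_distrib cong: if_cong)

lemma mode123_id_mat:
  assumes "i < p" "j < p" "k < p"
  shows "mode3 p (mode2 p (mode1 p W id_mat) id_mat) id_mat i j k = W i j k"
  using assms by (simp add: mode1_def mode2_def mode3_def sum_mult_id_mat)

lemma frob2_id_mat: "n \<le> p \<Longrightarrow> frob2 n p id_mat = sqrt n"
  by (simp add: frob2_def id_mat_def if_distrib[of "\<lambda>x. x\<^sup>2"] cong: if_cong)

lemma is_decomp_id_mat:
  assumes "0 < P" "n1 \<le> P" "n2 \<le> P" "n3 \<le> P"
  shows "is_decomp n1 n2 n3 X P P X (\<lambda>i d. id_mat i) (\<lambda>i d. id_mat i) (\<lambda>i d. id_mat i)"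
  using assms by (simp add: is_decomp_def slice_def mode123_id_mat)

lemma B_val_id_mat_pos:
  assumes "0 < n1" "0 < n2" "0 < n3" "n1 \<le> P" "n2 \<le> P" "n3 \<le> P"
  shows "0 < B_val 1 0 \<alpha> n1 n2 n3 P P X (\<lambda>i d. id_mat i) (\<lambda>i d. id_mat i) (\<lambda>i d. id_mat i)"
  using assms by (simp add: B_val_def slice_def frob2_id_mat add_pos_pos)

lemma exists_decomp_A_val_less_B_val:
  assumes "0 < n1" "0 < n2" "0 < n3"
    and "0 \<le> l1" "0 \<le> l4" "0 < l2" "0 \<le> l3" "0 < k" "\<alpha> \<noteq> 0"
  shows "\<exists>P D W H R T. is_decomp n1 n2 n3 X P D W H R T \<and>
           A_val l1 l4 \<alpha> n1 n2 n3 P D W H R T < k * B_val l2 l3 \<alpha> n1 n2 n3 P D W H R T"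
proof -
  define P where "P = n1 + n2 + n3"
  have "0 < P" "n1 \<le> P" "n2 \<le> P" "n3 \<le> P"
    using \<open>0 < n1\<close> by (simp_all add: P_def)
  with assms show ?thesis
    by (intro exists_rescaled_decomp_A_val_less_B_val[OF is_decomp_id_mat B_val_id_mat_pos]) simp_all
qed

lemma exists_decomp_A_val_greater_B_val:
  assumes "0 < l1"
  shows "\<exists>(n1::nat) (n2::nat) (n3::nat) (X::tensor3). 0 < n1 \<and> 0 < n2 \<and> 0 < n3 \<and>
           (\<exists>P D W H R T. is_decomp n1 n2 n3 X P D W H R T \<and>
              A_val l1 l4 \<alpha> n1 n2 n3 P D W H R T > k * B_val l2 l3 \<alpha> n1 n2 n3 P D W H R T)"
proof (intro exI conjI)
  let ?Z = "\<lambda>_ _ _. 0 :: real" and ?One = "\<lambda>_ _ _. 1 :: real"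
  show "is_decomp 1 1 1 ?Z 1 1 ?Z ?One ?Z ?Z"
    by (simp add: is_decomp_def mode1_def mode2_def mode3_def slice_def)
  show "A_val l1 l4 \<alpha> 1 1 1 1 1 ?Z ?One ?Z ?Z > k * B_val l2 l3 \<alpha> 1 1 1 1 1 ?Z ?One ?Z ?Z"
    using assms by (simp add: A_val_def B_val_def mode1_def mode2_def mode3_def slice_def frob2_def frob3_def)
qed simp_all

theorem proposition4:
  fixes l1 l2 l3 l4 \<alpha> :: real
  assumes "l1 > 0" "l2 > 0" "l3 > 0" "l4 > 0" "\<alpha> > 0"
  shows "(\<forall>(n1::nat) (n2::nat) (n3::nat) (X::tensor3). 0 < n1 \<longrightarrow> 0 < n2 \<longrightarrow> 0 < n3 \<longrightarrow>
            (\<exists>P D W H R T. is_decomp n1 n2 n3 X P D W H R T \<and>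
               A_val l1 l4 \<alpha> n1 n2 n3 P D W H R T
                 < sqrt (l1 * l4) / sqrt (l2 * l3) * B_val l2 l3 \<alpha> n1 n2 n3 P D W H R T))
       \<and> (\<exists>(n1::nat) (n2::nat) (n3::nat) (X::tensor3). 0 < n1 \<and> 0 < n2 \<and> 0 < n3 \<and>
            (\<exists>P D W H R T. is_decomp n1 n2 n3 X P D W H R T \<and>
               A_val l1 l4 \<alpha> n1 n2 n3 P D W H R T
                 > sqrt (l1 * l4) / sqrt (l2 * l3) * B_val l2 l3 \<alpha> n1 n2 n3 P D W H R T))"
  using assms
  by (intro conjI allI impI exists_decomp_A_val_less_B_val exists_decomp_A_val_greater_B_val)
    simp_all

end
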